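(* Let $m,n\ge1$, $1\le r\le mn$, $\mathcal{B}=\mathcal{B}(m,n;r)$ with symmetry group $G$, and fix a division of the grid cells into labelled regions such that every element of $G$ maps each region onto a region (board partitions being taken with respect to it). Suppose $\overline{\mathcal{B}}\subseteq\mathcal{B}$ satisfies: (1) $\overline{\mathcal{B}}$ is a disjoint union of sets $\pi_1,\dots,\pi_t$, each $\pi_i$ being the set of all boards in $\mathcal{B}$ with some fixed board partition; (2) every board of $\mathcal{B}$ is equivalent under $G$ to some board of $\overline{\mathcal{B}}$; (3) any two boards of $\overline{\mathcal{B}}$ that are equivalent under $G$ have the same board partition. Let $K_i=\{g\in G:g\cdot\pi_i=\pi_i\}$. Fix a tiling problem, and for each $i$ let $S_i\subseteq\pi_i$ be the set of boards in $\pi_i$ for which this tiling problem is solvable. Then the total number of boards in $\mathcal{B}(m,n;r)$ for which the tiling problem is solvable is \[\sum_{i=1}^t|S_i|\cdot[G:K_i].\]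
   Context: A grid has $m$ rows and $n$ columns of unit square cells; $\mathcal{B}(m,n;r)$ is the set of all boards, i.e. choices of exactly $r$ blocked cells. Symmetries of the rectangle act on boards; the symmetry group $G$ is $D_4$ (all 8 rotations and reflections of the square) if $m=n>1$, $\langle H,V\rangle=\{R_0,H,V,R_{180}\}$ (identity, reflections across the horizontal and vertical midlines, 180-degree rotation) if $m\neq n$ and $m,n>1$, and $\langle R_{180}\rangle$ if exactly one of $m,n$ is 1. Boards $B,B'$ are equivalent under $G$ if $g\cdot B=B'$ for some $g\in G$. Given a division of the grid into labelled regions, the board partition of a board is the tuple of numbers of blocked cells in each region. A polyomino is a shape made of finitely many edge-connected unit squares; a free polyomino may be rotated and reflected. A tiling problem consists of a prescribed list of free polyominoes whose total number of squares is $mn-r$; a board is solvable for it if the unblocked cells can be exactly covered, without gaps or overlaps, by placing each listed polyomino (in any rotation/reflection) once. *)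

theory Defs
  imports Main
begin

type_synonym cell = "nat \<times> nat"
type_synonym board = "cell set"

definition grid :: "nat \<Rightarrow> nat \<Rightarrow> cell set" where
  "grid m n = {(i,j). i < m \<and> j < n}"

definition boards :: "nat \<Rightarrow> nat \<Rightarrow> nat \<Rightarrow> board set" where
  "boards m n r = {B. B \<subseteq> grid m n \<and> card B = r}"

definition grid_map :: "nat \<Rightarrow> nat \<Rightarrow> (cell \<Rightarrow> cell) \<Rightarrow> cell \<Rightarrow> cell" where
  "grid_map m n f c = (if c \<in> grid m n then f c else c)"

definition symH :: "nat \<Rightarrow> nat \<Rightarrow> cell \<Rightarrow> cell" where
  "symH m n = grid_map m n (\<lambda>(i,j). (m - 1 - i, j))"
definition symV :: "nat \<Rightarrow> nat \<Rightarrow> cell \<Rightarrow> cell" where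
  "symV m n = grid_map m n (\<lambda>(i,j). (i, n - 1 - j))"
definition symR180 :: "nat \<Rightarrow> nat \<Rightarrow> cell \<Rightarrow> cell" where
  "symR180 m n = grid_map m n (\<lambda>(i,j). (m - 1 - i, n - 1 - j))"
definition symT :: "nat \<Rightarrow> nat \<Rightarrow> cell \<Rightarrow> cell" where
  "symT m n = grid_map m n (\<lambda>(i,j). (j, i))"
definition symAT :: "nat \<Rightarrow> nat \<Rightarrow> cell \<Rightarrow> cell" where
  "symAT m n = grid_map m n (\<lambda>(i,j). (n - 1 - j, m - 1 - i))"
definition symR90 :: "nat \<Rightarrow> nat \<Rightarrow> cell \<Rightarrow> cell" where
  "symR90 m n = grid_map m n (\<lambda>(i,j). (j, m - 1 - i))"
definition symR270 :: "nat \<Rightarrow> nat \<Rightarrow> cell \<Rightarrow> cell" where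
  "symR270 m n = grid_map m n (\<lambda>(i,j). (n - 1 - j, i))"

text \<open>The symmetry group G, as a set of permutations of the cells.
  (For m = n = 1 the group <R180> is used, which is trivial.)\<close>
definition symgroup :: "nat \<Rightarrow> nat \<Rightarrow> (cell \<Rightarrow> cell) set" where
  "symgroup m n =
    (if m = n \<and> m > 1 then
       {id, symH m n, symV m n, symR180 m n, symT m n, symAT m n, symR90 m n, symR270 m n}
     else if m > 1 \<and> n > 1 then {id, symH m n, symV m n, symR180 m n}
     else {id, symR180 m n})"

definition act :: "(cell \<Rightarrow> cell) \<Rightarrow> board \<Rightarrow> board" where
  "act g B = g ` B"

definition equivalent :: "nat \<Rightarrow> nat \<Rightarrow> board \<Rightarrow> board \<Rightarrow> bool" where
  "equivalent m n B B' \<longleftrightarrow> (\<exists>g \<in> symgroup m n. act g B = B')"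

definition region :: "nat \<Rightarrow> nat \<Rightarrow> (cell \<Rightarrow> 'l) \<Rightarrow> 'l \<Rightarrow> cell set" where
  "region m n reg l = {c \<in> grid m n. reg c = l}"

definition board_partition :: "(cell \<Rightarrow> 'l) \<Rightarrow> board \<Rightarrow> 'l \<Rightarrow> nat" where
  "board_partition reg B = (\<lambda>l. card {c \<in> B. reg c = l})"

definition regions_respected :: "nat \<Rightarrow> nat \<Rightarrow> (cell \<Rightarrow> 'l) \<Rightarrow> bool" where
  "regions_respected m n reg \<longleftrightarrow>
     (\<forall>g \<in> symgroup m n. \<forall>l. \<exists>l'. g ` region m n reg l = region m n reg l')"

type_synonym icell = "int \<times> int"

definition adjacent :: "icell \<Rightarrow> icell \<Rightarrow> bool" where
  "adjacent p q \<longleftrightarrow> \<bar>fst p - fst q\<bar> + \<bar>snd p - snd q\<bar> = 1"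

definition polyomino :: "icell set \<Rightarrow> bool" where
  "polyomino P \<longleftrightarrow> finite P \<and> P \<noteq> {} \<and>
     (\<forall>p \<in> P. \<forall>q \<in> P. (\<lambda>x y. x \<in> P \<and> y \<in> P \<and> adjacent x y)\<^sup>*\<^sup>* p q)"

definition plane_isos :: "(icell \<Rightarrow> icell) set" where
  "plane_isos = {\<lambda>(x,y). (x,y), \<lambda>(x,y). (-y,x), \<lambda>(x,y). (-x,-y), \<lambda>(x,y). (y,-x),
                 \<lambda>(x,y). (-x,y), \<lambda>(x,y). (x,-y), \<lambda>(x,y). (y,x), \<lambda>(x,y). (-y,-x)}"

definition placement_of :: "icell set \<Rightarrow> icell set \<Rightarrow> bool" where
  "placement_of P Q \<longleftrightarrow>
     (\<exists>T \<in> plane_isos. \<exists>a b. Q = (\<lambda>p. (fst (T p) + a, snd (T p) + b)) ` P)"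

definition tiling_problem :: "nat \<Rightarrow> nat \<Rightarrow> nat \<Rightarrow> icell set list \<Rightarrow> bool" where
  "tiling_problem m n r ps \<longleftrightarrow>
     (\<forall>P \<in> set ps. polyomino P) \<and> (\<Sum>P\<leftarrow>ps. card P) = m * n - r"

definition to_icell :: "cell \<Rightarrow> icell" where
  "to_icell c = (int (fst c), int (snd c))"

definition solvable :: "nat \<Rightarrow> nat \<Rightarrow> icell set list \<Rightarrow> board \<Rightarrow> bool" where
  "solvable m n ps B \<longleftrightarrow>
     (\<exists>Qs. length Qs = length ps \<and>
        (\<forall>k < length ps. placement_of (ps ! k) (Qs ! k)) \<and>
        (\<forall>k < length ps. \<forall>k' < length ps. k \<noteq> k' \<longrightarrow> Qs ! k \<inter> Qs ! k' = {}) \<and>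
        \<Union> (set Qs) = to_icell ` (grid m n - B))"

end

theory Submission
  imports Defs "HOL-Algebra.Group_Action"
begin

(* The symmetry group G acts on the boards, and the action preserves solvability because every
   symmetry agrees on the grid with a rigid motion of the plane. A symmetry maps regions onto
   regions, so it changes board partitions only by relabelling; with hypothesis (3) this makes the
   classes \<pi>_i a family of blocks for the action: if g maps some board of \<pi>_i into \<pi>_j, then i = j
   and g\<pi>_i = \<pi>_i. Consequently the translates g\<pi>_i of all classes are pairwise equal or disjoint,
   and by (2) they cover all boards. The translates of \<pi>_i form the orbit of \<pi>_i under the
   induced action on sets of boards, so there are [G : K_i] of them by the orbit-stabiliser
   theorem, and each contains exactly |S_i| solvable boards. *)

section \<open>Counting invariant sets along a family of blocks\<close>

lemma group_action_restrictI:
  assumes "group G"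
    and bij: "\<And>g. g \<in> carrier G \<Longrightarrow> bij_betw (f g) E E"
    and comp: "\<And>g h x. g \<in> carrier G \<Longrightarrow> h \<in> carrier G \<Longrightarrow> x \<in> E \<Longrightarrow>
                 f (g \<otimes>\<^bsub>G\<^esub> h) x = f g (f h x)"
  shows "group_action G E (\<lambda>g. restrict (f g) E)"
  unfolding group_action_def group_hom_def group_hom_axioms_def
proof (intro conjI homI)
  show "group G" "group (BijGroup E)" by (fact assms(1), fact group_BijGroup)
  show restr: "restrict (f g) E \<in> carrier (BijGroup E)" if "g \<in> carrier G" for g
    using bij[OF that] by (simp add: BijGroup_def Bij_def)
  show "restrict (f (g \<otimes>\<^bsub>G\<^esub> h)) E = restrict (f g) E \<otimes>\<^bsub>BijGroup E\<^esub> restrict (f h) E"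
    if "g \<in> carrier G" "h \<in> carrier G" for g h
    using restr[OF that(1)] restr[OF that(2)] that comp bij_betw_apply[OF bij[OF that(2)]]
    by (auto simp: BijGroup_def compose_def fun_eq_iff)
qed

lemma (in group_action) induced_set_action:
  "group_action G (Pow E) (\<lambda>g. \<lambda>A \<in> Pow E. \<phi> g ` A)"
proof (rule group_action_restrictI)
  show "group G" using group_hom by (simp add: group_hom_def)
  show "bij_betw ((`) (\<phi> g)) (Pow E) (Pow E)" if "g \<in> carrier G" for g
    using bij_prop0[OF that] by (simp add: Bij_def bij_betw_image_Pow)
  show "\<phi> (g \<otimes> h) ` A = \<phi> g ` \<phi> h ` A" if "g \<in> carrier G" "h \<in> carrier G" "A \<in> Pow E" for g h A
    using that composition_rule by (force simp: image_image)
qed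

lemma (in group_action) card_invariant_inter_image:
  assumes invariant: "\<And>g x. g \<in> carrier G \<Longrightarrow> x \<in> S \<Longrightarrow> \<phi> g x \<in> S"
    and "g \<in> carrier G" "A \<subseteq> E"
  shows "card (S \<inter> \<phi> g ` A) = card (S \<inter> A)"
proof -
  interpret group G using group_hom group_hom.axioms(1) by blast
  have "S \<inter> \<phi> g ` A = \<phi> g ` (S \<inter> A)"
  proof
    show "\<phi> g ` (S \<inter> A) \<subseteq> S \<inter> \<phi> g ` A" using invariant assms(2) by auto
    show "S \<inter> \<phi> g ` A \<subseteq> \<phi> g ` (S \<inter> A)"
    proof
      fix y assume "y \<in> S \<inter> \<phi> g ` A"
      then obtain x where x: "x \<in> A" "y = \<phi> g x" "y \<in> S" by blast
      then have "\<phi> (inv g) y = x" using assms orbit_sym_aux[of g x y] by auto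
      then have "x \<in> S" using invariant[of "inv g" y] x(3) assms(2) by auto
      then show "y \<in> \<phi> g ` (S \<inter> A)" using x by blast
    qed
  qed
  moreover have "inj_on (\<phi> g) (S \<inter> A)"
    using inj_prop[OF assms(2)] assms(3) by (meson inf_le2 inj_on_subset subset_trans)
  ultimately show ?thesis by (simp add: card_image)
qed

lemma (in group_action) card_translates:
  assumes "finite (carrier G)" "A \<subseteq> E"
  shows "card ((\<lambda>g. \<phi> g ` A) ` carrier G) = order G div card {g \<in> carrier G. \<phi> g ` A = A}"
proof -
  interpret sets: group_action G "Pow E" "\<lambda>g. \<lambda>A \<in> Pow E. \<phi> g ` A"
    by (rule induced_set_action)
  have A: "A \<in> Pow E" using assms(2) by simp
  let ?orb = "orbit G (\<lambda>g. \<lambda>A \<in> Pow E. \<phi> g ` A) A"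
  let ?stab = "stabilizer G (\<lambda>g. \<lambda>A \<in> Pow E. \<phi> g ` A) A"
  have "card ?stab > 0"
    using sets.stabilizer_one_closed[OF A] sets.stabilizer_subset assms(1)
    by (metis card_gt_0_iff empty_iff finite_subset)
  then have "card ?orb = order G div card ?stab"
    using sets.orbit_stabilizer_theorem[OF A] by (metis div_mult_self_is_m)
  moreover have "(\<lambda>g. \<phi> g ` A) ` carrier G = ?orb" using A by (auto simp: orbit_def)
  moreover have "{g \<in> carrier G. \<phi> g ` A = A} = ?stab" using A by (simp add: stabilizer_def)
  ultimately show ?thesis by (simp only:)
qed

locale separated_blocks = group_action +
  fixes I :: "'i set" and P :: "'i \<Rightarrow> 'b set"
  assumes blocks_subset: "i \<in> I \<Longrightarrow> P i \<subseteq> E"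
    and blocks_separated: "\<lbrakk>i \<in> I; j \<in> I; g \<in> carrier G; x \<in> P i; \<phi> g x \<in> P j\<rbrakk> \<Longrightarrow> i = j"
    and block_property:
      "\<lbrakk>i \<in> I; g \<in> carrier G; x \<in> P i; \<phi> g x \<in> P i; y \<in> P i\<rbrakk> \<Longrightarrow> \<phi> g y \<in> P i"

sublocale separated_blocks \<subseteq> group G
  using group_hom group_hom.axioms(1) by blast

context separated_blocks
begin

definition translates :: "'i \<Rightarrow> 'b set set" where
  "translates i = (\<lambda>g. \<phi> g ` P i) ` carrier G"

lemma block_stable:
  assumes "i \<in> I" "g \<in> carrier G" "x \<in> P i" "\<phi> g x \<in> P i"
  shows "\<phi> g ` P i = P i"
proof
  show "\<phi> g ` P i \<subseteq> P i" using assms block_property by blast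
  have "\<phi> (inv g) (\<phi> g x) = x"
    using assms blocks_subset orbit_sym_aux by blast
  then have inv_in: "\<phi> (inv g) y \<in> P i" if "y \<in> P i" for y
    using assms that block_property[of i "inv g" "\<phi> g x" y] by auto
  show "P i \<subseteq> \<phi> g ` P i"
  proof
    fix y assume "y \<in> P i"
    moreover have "\<phi> g (\<phi> (inv g) y) = y"
      using assms \<open>y \<in> P i\<close> blocks_subset orbit_sym_aux[of "inv g" y] by auto
    ultimately show "y \<in> \<phi> g ` P i" using inv_in by (metis imageI)
  qed
qed

lemma translates_meet:
  assumes "i \<in> I" "j \<in> I" "X \<in> translates i" "Y \<in> translates j" "X \<inter> Y \<noteq> {}"
  shows "i = j \<and> X = Y"
proof -
  obtain g h x y where gh: "g \<in> carrier G" "h \<in> carrier G" "X = \<phi> g ` P i" "Y = \<phi> h ` P j"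
    and xy: "x \<in> P i" "y \<in> P j" "\<phi> g x = \<phi> h y"
    using assms(3-5) by (auto simp: translates_def)
  let ?k = "inv h \<otimes> g"
  have k: "?k \<in> carrier G" using gh by simp
  have "\<phi> ?k x = y"
    using assms gh xy blocks_subset composition_rule orbit_sym_aux by (metis inv_closed subsetD)
  then have "i = j" using assms k xy blocks_separated by blast
  have "\<phi> h ` \<phi> ?k ` P i = \<phi> h ` P i"
    using block_stable[OF \<open>i \<in> I\<close> k \<open>x \<in> P i\<close>] \<open>\<phi> ?k x = y\<close> xy \<open>i = j\<close> by simp
  moreover have "\<phi> h (\<phi> ?k z) = \<phi> g z" if "z \<in> P i" for z
    using assms gh that blocks_subset[of i] composition_rule[of z h ?k]
    by (auto simp: m_assoc[symmetric])
  then have "\<phi> h ` \<phi> ?k ` P i = \<phi> g ` P i" by (force simp: image_image)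
  ultimately show ?thesis using \<open>i = j\<close> gh by simp
qed

lemma card_inter_Union_translates:
  assumes "finite (carrier G)" "finite S" "i \<in> I"
    and invariant: "\<And>g x. g \<in> carrier G \<Longrightarrow> x \<in> S \<Longrightarrow> \<phi> g x \<in> S"
  shows "card (S \<inter> \<Union>(translates i)) = card (translates i) * card (S \<inter> P i)"
proof -
  have "card (S \<inter> \<Union>(translates i)) = (\<Sum>X\<in>translates i. card (S \<inter> X))"
    unfolding Int_Union
  proof (rule card_UN_disjoint)
    show "finite (translates i)" using assms(1) by (simp add: translates_def)
    show "\<forall>X\<in>translates i. finite (S \<inter> X)" using assms(2) by blast
    show "\<forall>X\<in>translates i. \<forall>Y\<in>translates i. X \<noteq> Y \<longrightarrow> S \<inter> X \<inter> (S \<inter> Y) = {}"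
      using translates_meet[OF assms(3) assms(3)] by blast
  qed
  also have "\<dots> = (\<Sum>X\<in>translates i. card (S \<inter> P i))"
  proof (rule sum.cong)
    fix X assume "X \<in> translates i"
    then obtain g where "g \<in> carrier G" "X = \<phi> g ` P i" by (auto simp: translates_def)
    then show "card (S \<inter> X) = card (S \<inter> P i)"
      using card_invariant_inter_image[OF invariant] blocks_subset[OF assms(3)] by simp
  qed simp
  finally show ?thesis by simp
qed

theorem card_invariant_set_by_blocks:
  assumes finite: "finite (carrier G)" "finite E" "finite I"
    and invariant: "\<And>g x. g \<in> carrier G \<Longrightarrow> x \<in> S \<Longrightarrow> \<phi> g x \<in> S" and "S \<subseteq> E"
    and cover: "\<And>x. x \<in> E \<Longrightarrow> \<exists>i \<in> I. \<exists>y \<in> P i. x \<in> orbit G \<phi> y"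
  shows "card S =
    (\<Sum>i\<in>I. card (S \<inter> P i) * (order G div card {g \<in> carrier G. \<phi> g ` P i = P i}))"
proof -
  have finite_S: "finite S" using finite(2) \<open>S \<subseteq> E\<close> by (rule finite_subset[rotated])
  have "S = (\<Union>i\<in>I. S \<inter> \<Union>(translates i))"
  proof (intro equalityI subsetI)
    fix x assume "x \<in> S"
    then obtain i y g where "i \<in> I" "y \<in> P i" "g \<in> carrier G" "x = \<phi> g y"
      using cover \<open>S \<subseteq> E\<close> by (force simp: orbit_def)
    then show "x \<in> (\<Union>i\<in>I. S \<inter> \<Union>(translates i))" using \<open>x \<in> S\<close> by (auto simp: translates_def)
  qed blast
  moreover have "card (\<Union>i\<in>I. S \<inter> \<Union>(translates i)) = (\<Sum>i\<in>I. card (S \<inter> \<Union>(translates i)))"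
  proof (rule card_UN_disjoint)
    show "finite I" by (fact finite(3))
    show "\<forall>i\<in>I. finite (S \<inter> \<Union>(translates i))" using finite_S by blast
    show "\<forall>i\<in>I. \<forall>j\<in>I. i \<noteq> j \<longrightarrow> S \<inter> \<Union>(translates i) \<inter> (S \<inter> \<Union>(translates j)) = {}"
      using translates_meet by blast
  qed
  ultimately show ?thesis
    using card_inter_Union_translates[OF finite(1) finite_S _ invariant]
      card_translates[OF finite(1) blocks_subset]
    by (simp add: translates_def mult.commute)
qed

end

section \<open>The symmetry group of the grid\<close>

lemma symgroup_comp_simps [simp]:
  "symH m n \<circ> symH m n = id" "symH m n \<circ> symV m n = symR180 m n" "symH m n \<circ> symR180 m n = symV m n"
  "symV m n \<circ> symH m n = symR180 m n" "symV m n \<circ> symV m n = id" "symV m n \<circ> symR180 m n = symH m n"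
  "symR180 m n \<circ> symH m n = symV m n" "symR180 m n \<circ> symV m n = symH m n" "symR180 m n \<circ> symR180 m n = id"
  "symH m m \<circ> symT m m = symR270 m m" "symH m m \<circ> symAT m m = symR90 m m"
  "symH m m \<circ> symR90 m m = symAT m m" "symH m m \<circ> symR270 m m = symT m m"
  "symV m m \<circ> symT m m = symR90 m m" "symV m m \<circ> symAT m m = symR270 m m"
  "symV m m \<circ> symR90 m m = symT m m" "symV m m \<circ> symR270 m m = symAT m m"
  "symR180 m m \<circ> symT m m = symAT m m" "symR180 m m \<circ> symAT m m = symT m m"
  "symR180 m m \<circ> symR90 m m = symR270 m m" "symR180 m m \<circ> symR270 m m = symR90 m m"
  "symT m m \<circ> symH m m = symR90 m m" "symT m m \<circ> symV m m = symR270 m m"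
  "symT m m \<circ> symR180 m m = symAT m m" "symT m m \<circ> symT m m = id"
  "symT m m \<circ> symAT m m = symR180 m m" "symT m m \<circ> symR90 m m = symH m m"
  "symT m m \<circ> symR270 m m = symV m m"
  "symAT m m \<circ> symH m m = symR270 m m" "symAT m m \<circ> symV m m = symR90 m m"
  "symAT m m \<circ> symR180 m m = symT m m" "symAT m m \<circ> symT m m = symR180 m m"
  "symAT m m \<circ> symAT m m = id" "symAT m m \<circ> symR90 m m = symV m m"
  "symAT m m \<circ> symR270 m m = symH m m"
  "symR90 m m \<circ> symH m m = symT m m" "symR90 m m \<circ> symV m m = symAT m m"
  "symR90 m m \<circ> symR180 m m = symR270 m m" "symR90 m m \<circ> symT m m = symV m m"
  "symR90 m m \<circ> symAT m m = symH m m" "symR90 m m \<circ> symR90 m m = symR180 m m"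
  "symR90 m m \<circ> symR270 m m = id"
  "symR270 m m \<circ> symH m m = symAT m m" "symR270 m m \<circ> symV m m = symT m m"
  "symR270 m m \<circ> symR180 m m = symR90 m m" "symR270 m m \<circ> symT m m = symH m m"
  "symR270 m m \<circ> symAT m m = symV m m" "symR270 m m \<circ> symR90 m m = id"
  "symR270 m m \<circ> symR270 m m = symR180 m m"
  by (auto simp: fun_eq_iff symH_def symV_def symR180_def symT_def symAT_def symR90_def
      symR270_def grid_map_def grid_def)

lemma id_mem_symgroup: "id \<in> symgroup m n"
  by (simp add: symgroup_def)

lemma comp_mem_symgroup: "g \<in> symgroup m n \<Longrightarrow> h \<in> symgroup m n \<Longrightarrow> g \<circ> h \<in> symgroup m n"
  unfolding symgroup_def by (auto split: if_splits)

lemma finite_symgroup: "finite (symgroup m n)"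
  by (simp add: symgroup_def)

lemma symgroup_fourth_power: "g \<in> symgroup m n \<Longrightarrow> g \<circ> g \<circ> g \<circ> g = id"
  unfolding symgroup_def by (auto split: if_splits)

lemma symgroup_inverse:
  assumes "g \<in> symgroup m n"
  obtains h where "h \<in> symgroup m n" "h \<circ> g = id" "g \<circ> h = id"
proof
  show "g \<circ> g \<circ> g \<in> symgroup m n" using assms by (intro comp_mem_symgroup)
  show "g \<circ> g \<circ> g \<circ> g = id" "g \<circ> (g \<circ> g \<circ> g) = id"
    using symgroup_fourth_power[OF assms] by (simp_all add: comp_assoc)
qed

lemma symgroup_maps_grid: "g \<in> symgroup m n \<Longrightarrow> c \<in> grid m n \<Longrightarrow> g c \<in> grid m n"
  unfolding symgroup_def
  by (auto simp: symH_def symV_def symR180_def symT_def symAT_def symR90_def symR270_def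
      grid_map_def grid_def split: if_splits)

lemma inj_symgroup: "g \<in> symgroup m n \<Longrightarrow> inj g"
  by (metis symgroup_inverse inj_on_id inj_on_imageI2 image_comp image_id)

definition symmetry_group :: "nat \<Rightarrow> nat \<Rightarrow> (cell \<Rightarrow> cell) monoid" where
  "symmetry_group m n = \<lparr>carrier = symgroup m n, mult = (\<circ>), one = id\<rparr>"

lemma symmetry_group_simps [simp]:
  "carrier (symmetry_group m n) = symgroup m n"
  "g \<otimes>\<^bsub>symmetry_group m n\<^esub> h = g \<circ> h"
  "\<one>\<^bsub>symmetry_group m n\<^esub> = id"
  by (simp_all add: symmetry_group_def)

lemma group_symmetry_group: "group (symmetry_group m n)"
proof (rule groupI)
  show "\<exists>h \<in> carrier (symmetry_group m n). h \<otimes>\<^bsub>symmetry_group m n\<^esub> g = \<one>\<^bsub>symmetry_group m n\<^esub>"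
    if "g \<in> carrier (symmetry_group m n)" for g
    using that by (auto elim: symgroup_inverse)
qed (simp_all add: id_mem_symgroup comp_mem_symgroup comp_assoc)

lemma finite_grid: "finite (grid m n)"
  by (rule finite_subset[of _ "{..<m} \<times> {..<n}"]) (auto simp: grid_def)

lemma symgroup_image_grid: "g \<in> symgroup m n \<Longrightarrow> g ` grid m n = grid m n"
  by (meson endo_inj_surj finite_grid image_subsetI inj_on_subset inj_symgroup subset_UNIV
      symgroup_maps_grid)

lemma finite_boards: "finite (boards m n r)"
  by (rule finite_subset[of _ "Pow (grid m n)"]) (auto simp: boards_def finite_grid)

lemma act_mem_boards:
  assumes g: "g \<in> symgroup m n" and B: "B \<in> boards m n r"
  shows "act g B \<in> boards m n r"
proof -
  have "g ` B \<subseteq> grid m n" using B symgroup_maps_grid[OF g] by (auto simp: boards_def)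
  moreover have "card (g ` B) = card B" using inj_symgroup[OF g] by (simp add: card_image inj_on_subset)
  ultimately show ?thesis using B by (simp add: boards_def act_def)
qed

definition board_action :: "nat \<Rightarrow> nat \<Rightarrow> nat \<Rightarrow> (cell \<Rightarrow> cell) \<Rightarrow> board \<Rightarrow> board" where
  "board_action m n r g = restrict (act g) (boards m n r)"

lemma board_action_image: "A \<subseteq> boards m n r \<Longrightarrow> board_action m n r g ` A = act g ` A"
  by (auto simp: board_action_def)

lemma group_action_board_action:
  "group_action (symmetry_group m n) (boards m n r) (board_action m n r)"
  unfolding board_action_def[abs_def]
proof (rule group_action_restrictI)
  show "bij_betw (act g) (boards m n r) (boards m n r)"
    if g: "g \<in> carrier (symmetry_group m n)" for g
  proof -
    from g obtain h where h: "h \<in> symgroup m n" "h \<circ> g = id" "g \<circ> h = id"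
      by (auto intro: symgroup_inverse)
    show ?thesis
    proof (rule bij_betw_byWitness[where f' = "act h"])
      show "\<forall>B \<in> boards m n r. act h (act g B) = B" "\<forall>B \<in> boards m n r. act g (act h B) = B"
        using h by (simp_all add: act_def image_comp)
      show "act g ` boards m n r \<subseteq> boards m n r" "act h ` boards m n r \<subseteq> boards m n r"
        using g h act_mem_boards by auto
    qed
  qed
qed (simp_all add: group_symmetry_group act_def image_comp)

lemma orbit_board_action_iff_equivalent:
  assumes "B \<in> boards m n r" "B' \<in> boards m n r"
  shows "B \<in> orbit (symmetry_group m n) (board_action m n r) B' \<longleftrightarrow> equivalent m n B B'"
proof -
  interpret group_action "symmetry_group m n" "boards m n r" "board_action m n r"
    by (rule group_action_board_action)
  have "B' \<in> orbit (symmetry_group m n) (board_action m n r) B \<longleftrightarrow> equivalent m n B B'"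
    using assms(1) by (auto simp: orbit_def equivalent_def board_action_def)
  then show ?thesis using orbit_sym assms by blast
qed


section \<open>Solvability is invariant under the symmetries\<close>

definition rigid_motion :: "(icell \<Rightarrow> icell) \<Rightarrow> int \<Rightarrow> int \<Rightarrow> icell \<Rightarrow> icell" where
  "rigid_motion T a b p = (fst (T p) + a, snd (T p) + b)"

lemma placement_of_iff: "placement_of P Q \<longleftrightarrow> (\<exists>T \<in> plane_isos. \<exists>a b. Q = rigid_motion T a b ` P)"
  by (simp add: placement_of_def rigid_motion_def[abs_def])

lemma comp_mem_plane_isos: "T \<in> plane_isos \<Longrightarrow> T' \<in> plane_isos \<Longrightarrow> T \<circ> T' \<in> plane_isos"
  unfolding plane_isos_def by (elim insertE emptyE; simp add: comp_def case_prod_beta')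

lemma rigid_motion_comp:
  assumes "T \<in> plane_isos"
  shows "rigid_motion T a b \<circ> rigid_motion T' a' b' =
         rigid_motion (T \<circ> T') (fst (T (a', b')) + a) (snd (T (a', b')) + b)"
proof
  fix p
  show "(rigid_motion T a b \<circ> rigid_motion T' a' b') p =
        rigid_motion (T \<circ> T') (fst (T (a', b')) + a) (snd (T (a', b')) + b) p"
    using assms unfolding plane_isos_def
    by (elim insertE emptyE; simp add: rigid_motion_def case_prod_beta')
qed

lemma inj_rigid_motion: "T \<in> plane_isos \<Longrightarrow> inj (rigid_motion T a b)"
  unfolding plane_isos_def
  by (elim insertE emptyE; auto simp: inj_def rigid_motion_def case_prod_beta' prod_eq_iff)

lemma placement_of_rigid_motion:
  assumes "T \<in> plane_isos" "placement_of P Q"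
  shows "placement_of P (rigid_motion T a b ` Q)"
proof -
  obtain T' a' b' where "T' \<in> plane_isos" "Q = rigid_motion T' a' b' ` P"
    using assms(2) by (auto simp: placement_of_iff)
  then have "rigid_motion T a b ` Q = rigid_motion (T \<circ> T') (fst (T (a', b')) + a) (snd (T (a', b')) + b) ` P"
    by (simp add: image_comp rigid_motion_comp[OF assms(1)])
  then show ?thesis
    using assms(1) \<open>T' \<in> plane_isos\<close> comp_mem_plane_isos unfolding placement_of_iff by blast
qed

lemma symmetries_are_rigid_motions:
  assumes "c \<in> grid m n"
  shows "to_icell (id c) = rigid_motion (\<lambda>(x, y). (x, y)) 0 0 (to_icell c)"
    and "to_icell (symH m n c) = rigid_motion (\<lambda>(x, y). (- x, y)) (int m - 1) 0 (to_icell c)"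
    and "to_icell (symV m n c) = rigid_motion (\<lambda>(x, y). (x, - y)) 0 (int n - 1) (to_icell c)"
    and "to_icell (symR180 m n c) =
           rigid_motion (\<lambda>(x, y). (- x, - y)) (int m - 1) (int n - 1) (to_icell c)"
    and "to_icell (symT m n c) = rigid_motion (\<lambda>(x, y). (y, x)) 0 0 (to_icell c)"
    and "to_icell (symAT m n c) =
           rigid_motion (\<lambda>(x, y). (- y, - x)) (int n - 1) (int m - 1) (to_icell c)"
    and "to_icell (symR90 m n c) = rigid_motion (\<lambda>(x, y). (y, - x)) 0 (int m - 1) (to_icell c)"
    and "to_icell (symR270 m n c) = rigid_motion (\<lambda>(x, y). (- y, x)) (int n - 1) 0 (to_icell c)"
  using assms
  by (auto simp: symH_def symV_def symR180_def symT_def symAT_def symR90_def symR270_def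
      grid_map_def grid_def to_icell_def rigid_motion_def of_nat_diff)

lemma symgroup_rigid_motion:
  assumes "g \<in> symgroup m n"
  obtains T a b where "T \<in> plane_isos"
    and "\<And>c. c \<in> grid m n \<Longrightarrow> to_icell (g c) = rigid_motion T a b (to_icell c)"
proof -
  have "g \<in> {id, symH m n, symV m n, symR180 m n, symT m n, symAT m n, symR90 m n, symR270 m n}"
    using assms unfolding symgroup_def by (auto split: if_splits)
  then show ?thesis
    using that symmetries_are_rigid_motions[of _ m n] unfolding plane_isos_def
    by (elim insertE emptyE) blast+
qed

lemma solvable_image_rigid_motion:
  assumes "T \<in> plane_isos"
    and motion: "\<And>c. c \<in> grid m n \<Longrightarrow> to_icell (g c) = rigid_motion T a b (to_icell c)"
    and "inj_on g (grid m n)" "g ` grid m n = grid m n" "B \<subseteq> grid m n"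
    and "solvable m n ps B"
  shows "solvable m n ps (g ` B)"
proof -
  let ?M = "rigid_motion T a b"
  obtain Qs where Qs: "length Qs = length ps" "\<forall>k < length ps. placement_of (ps ! k) (Qs ! k)"
      "\<forall>k < length ps. \<forall>k' < length ps. k \<noteq> k' \<longrightarrow> Qs ! k \<inter> Qs ! k' = {}"
      "\<Union> (set Qs) = to_icell ` (grid m n - B)"
    using assms(6) unfolding solvable_def by blast
  have "\<Union> (set (map ((`) ?M) Qs)) = ?M ` \<Union> (set Qs)"
    by (simp add: image_Union)
  also have "\<dots> = ?M ` to_icell ` (grid m n - B)"
    using Qs(4) by simp
  also have "\<dots> = to_icell ` g ` (grid m n - B)"
    using motion by (force simp: image_image)
  also have "g ` (grid m n - B) = grid m n - g ` B"
    using assms(3-5) by (simp add: inj_on_image_set_diff)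
  finally have "\<Union> (set (map ((`) ?M) Qs)) = to_icell ` (grid m n - g ` B)" .
  moreover have "\<forall>k < length ps. placement_of (ps ! k) (map ((`) ?M) Qs ! k)"
    using Qs(1,2) placement_of_rigid_motion[OF assms(1)] by simp
  moreover have "\<forall>k < length ps. \<forall>k' < length ps. k \<noteq> k' \<longrightarrow>
      map ((`) ?M) Qs ! k \<inter> map ((`) ?M) Qs ! k' = {}"
    using Qs(1,3) inj_rigid_motion[OF assms(1)] by (simp add: image_Int[symmetric])
  ultimately show ?thesis unfolding solvable_def using Qs(1) by (metis length_map)
qed

lemma solvable_act:
  assumes "g \<in> symgroup m n" "B \<subseteq> grid m n" "solvable m n ps B"
  shows "solvable m n ps (act g B)"
proof -
  obtain T a b where "T \<in> plane_isos"
    and "\<And>c. c \<in> grid m n \<Longrightarrow> to_icell (g c) = rigid_motion T a b (to_icell c)"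
    using symgroup_rigid_motion[OF assms(1)] by blast
  then show ?thesis unfolding act_def
    using solvable_image_rigid_motion inj_symgroup symgroup_image_grid assms
    by (metis inj_on_subset subset_UNIV)
qed


section \<open>Board partitions\<close>

lemma board_partition_act:
  assumes "regions_respected m n reg" "g \<in> symgroup m n"
  obtains L where "\<And>B. B \<subseteq> grid m n \<Longrightarrow> board_partition reg (act g B) = board_partition reg B \<circ> L"
proof -
  obtain h where h: "h \<in> symgroup m n" "h \<circ> g = id" by (rule symgroup_inverse[OF assms(2)])
  obtain L where L: "\<And>l. h ` region m n reg l = region m n reg (L l)"
    using assms(1) h(1) unfolding regions_respected_def by metis
  have label: "reg (g c) = l \<longleftrightarrow> reg c = L l" if c: "c \<in> grid m n" for c l
  proof -
    have "reg (g c) = l \<longleftrightarrow> g c \<in> region m n reg l"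
      using symgroup_maps_grid[OF assms(2) c] by (simp add: region_def)
    also have "\<dots> \<longleftrightarrow> h (g c) \<in> h ` region m n reg l"
      using inj_symgroup[OF h(1)] by (simp add: inj_image_mem_iff)
    also have "\<dots> \<longleftrightarrow> reg c = L l"
      using h(2) L c by (simp add: region_def pointfree_idE)
    finally show ?thesis .
  qed
  show thesis
  proof (rule that)
    fix B assume B: "B \<subseteq> grid m n"
    show "board_partition reg (act g B) = board_partition reg B \<circ> L"
    proof
      fix l
      have "{c \<in> act g B. reg c = l} = g ` {c \<in> B. reg (g c) = l}" by (auto simp: act_def)
      also have "{c \<in> B. reg (g c) = l} = {c \<in> B. reg c = L l}" using label B by auto
      finally show "board_partition reg (act g B) l = (board_partition reg B \<circ> L) l"
        using inj_symgroup[OF assms(2)] by (simp add: board_partition_def card_image inj_on_subset)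
    qed
  qed
qed

lemma board_partition_act_eq:
  assumes "regions_respected m n reg" "g \<in> symgroup m n" "A \<subseteq> grid m n" "B \<subseteq> grid m n"
    and "board_partition reg (act g A) = board_partition reg A"
    and "board_partition reg B = board_partition reg A"
  shows "board_partition reg (act g B) = board_partition reg B"
proof -
  obtain L where "\<And>B. B \<subseteq> grid m n \<Longrightarrow> board_partition reg (act g B) = board_partition reg B \<circ> L"
    using board_partition_act[OF assms(1,2)] by blast
  then show ?thesis using assms(3-6) by metis
qed

lemma separated_blocks_board_classes:
  assumes "regions_respected m n reg"
    and classes: "\<forall>i \<in> I. \<pi> i = {B \<in> boards m n r. board_partition reg B = p i}"
    and disjoint: "\<forall>i \<in> I. \<forall>j \<in> I. i \<noteq> j \<longrightarrow> \<pi> i \<inter> \<pi> j = {}"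
    and same_partition: "\<forall>B \<in> (\<Union>i \<in> I. \<pi> i). \<forall>B' \<in> (\<Union>i \<in> I. \<pi> i).
           equivalent m n B B' \<longrightarrow> board_partition reg B = board_partition reg B'"
  shows "separated_blocks (symmetry_group m n) (boards m n r) (board_action m n r) I \<pi>"
proof (intro separated_blocks.intro separated_blocks_axioms.intro group_action_board_action)
  show "\<pi> i \<subseteq> boards m n r" if "i \<in> I" for i using classes that by auto
  show "i = j" if "i \<in> I" "j \<in> I" "g \<in> carrier (symmetry_group m n)"
    "B \<in> \<pi> i" "board_action m n r g B \<in> \<pi> j" for i j g B
  proof -
    have "B \<in> boards m n r" using that(1,4) classes by auto
    then have "act g B \<in> \<pi> j" using that(5) by (simp add: board_action_def)
    moreover have "equivalent m n B (act g B)" using that(3) by (auto simp: equivalent_def)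
    ultimately have "board_partition reg B = board_partition reg (act g B)"
      using same_partition that(1,2,4) by blast
    then have "\<pi> i = \<pi> j" using that \<open>act g B \<in> \<pi> j\<close> classes by auto
    then show "i = j" using that disjoint by blast
  qed
  show "board_action m n r g C \<in> \<pi> i"
    if "i \<in> I" "g \<in> carrier (symmetry_group m n)" "B \<in> \<pi> i"
      "board_action m n r g B \<in> \<pi> i" "C \<in> \<pi> i" for i g B C
    using that classes board_partition_act_eq[OF assms(1), of g B C] act_mem_boards
    by (auto simp: board_action_def boards_def)
qed

theorem corollary3p2:
  fixes m n r t :: nat
    and reg :: "cell \<Rightarrow> 'l"
    and Bbar :: "board set"
    and \<pi> :: "nat \<Rightarrow> board set"
    and p :: "nat \<Rightarrow> 'l \<Rightarrow> nat"
    and ps :: "icell set list"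
  assumes "m \<ge> 1" and "n \<ge> 1" and "1 \<le> r" and "r \<le> m * n"
    and "regions_respected m n reg"
    and "Bbar \<subseteq> boards m n r"
    and "\<forall>i \<in> {1..t}. \<pi> i = {B \<in> boards m n r. board_partition reg B = p i}"
    and "\<forall>i \<in> {1..t}. \<forall>j \<in> {1..t}. i \<noteq> j \<longrightarrow> \<pi> i \<inter> \<pi> j = {}"
    and "Bbar = (\<Union>i \<in> {1..t}. \<pi> i)"
    and "\<forall>B \<in> boards m n r. \<exists>B' \<in> Bbar. equivalent m n B B'"
    and "\<forall>B \<in> Bbar. \<forall>B' \<in> Bbar. equivalent m n B B' \<longrightarrow>
           board_partition reg B = board_partition reg B'"
    and "tiling_problem m n r ps"
  shows "card {B \<in> boards m n r. solvable m n ps B} =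
         (\<Sum>i = 1..t. card {B \<in> \<pi> i. solvable m n ps B} *
            (card (symgroup m n) div card {g \<in> symgroup m n. act g ` \<pi> i = \<pi> i}))"
proof -
  let ?S = "{B \<in> boards m n r. solvable m n ps B}"
  interpret separated_blocks "symmetry_group m n" "boards m n r" "board_action m n r" "{1..t}" \<pi>
    using separated_blocks_board_classes assms(5,7,8,11) unfolding assms(9) by blast
  have "card ?S = (\<Sum>i = 1..t. card (?S \<inter> \<pi> i) * (order (symmetry_group m n) div
          card {g \<in> carrier (symmetry_group m n). board_action m n r g ` \<pi> i = \<pi> i}))"
  proof (rule card_invariant_set_by_blocks)
    show "board_action m n r g B \<in> ?S" if "g \<in> carrier (symmetry_group m n)" "B \<in> ?S" for g B
      using that solvable_act act_mem_boards by (auto simp: board_action_def boards_def)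
    show "\<exists>i \<in> {1..t}. \<exists>B' \<in> \<pi> i. B \<in> orbit (symmetry_group m n) (board_action m n r) B'"
      if B: "B \<in> boards m n r" for B
    proof -
      obtain B' where "B' \<in> Bbar" "equivalent m n B B'" using assms(10) B by blast
      moreover obtain i where "i \<in> {1..t}" "B' \<in> \<pi> i" using \<open>B' \<in> Bbar\<close> assms(9) by blast
      ultimately show ?thesis
        using B blocks_subset orbit_board_action_iff_equivalent[of B m n r B'] by blast
    qed
  qed (auto simp: finite_symgroup finite_boards)
  moreover have "?S \<inter> \<pi> i = {B \<in> \<pi> i. solvable m n ps B}"
    and "{g \<in> carrier (symmetry_group m n). board_action m n r g ` \<pi> i = \<pi> i} =
         {g \<in> symgroup m n. act g ` \<pi> i = \<pi> i}"
    if "i \<in> {1..t}" for i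
    using blocks_subset[OF that] by (auto simp: board_action_image)
  ultimately show ?thesis by (simp add: order_def)
qed

end
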